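(* Let $\mathcal{M}=(E,\mathcal{I})$ be a matroid whose ground set $E$ is dependent, let $S\subseteq E$ be a dependent set, and let $T\subseteq S$. Then $$q_{S,\mathcal{M}}-q_{S\setminus T,\mathcal{M}}=\Pr_{\pi}\big[C_\pi\subseteq S \text{ and } C_\pi\cap T\neq\emptyset\big]\le p_{T,\mathcal{M}|_S},$$ where $\pi$ is a uniformly random permutation of $E$ on the left and in the middle, while $p_{T,\mathcal{M}|_S}$ is computed with respect to uniformly random permutations of $S$.
   Context: For a matroid $\mathcal{N}$ whose ground set $F$ is dependent and a permutation $\pi$ of $F$, $C_\pi$ denotes the first circuit formed when adding elements in the order of $\pi$: if the first $j$ elements of $\pi$ form an independent set but the first $j+1$ do not, $C_\pi$ is the unique circuit contained in the first $j+1$ elements. For $T\subseteq F$, the hitting probability is $p_{T,\mathcal{N}}=\Pr_\pi[C_\pi\cap T\neq\emptyset]$ and the circuit mass is $q_{T,\mathcal{N}}=\Pr_\pi[C_\pi\subseteq T]$, where $\pi$ is a uniformly random permutation of $F$. $\mathcal{M}|_S$ denotes the restriction of $\mathcal{M}$ to $S$ (independent sets are the independent sets of $\mathcal{M}$ contained in $S$). *)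

theory Defs
  imports Complex_Main "HOL-Combinatorics.Multiset_Permutations"
begin

definition matroid :: "'a set \<Rightarrow> ('a set \<Rightarrow> bool) \<Rightarrow> bool" where
  "matroid E indep \<longleftrightarrow> finite E \<and> (\<forall>X. indep X \<longrightarrow> X \<subseteq> E) \<and> indep {} \<and>
     (\<forall>X Y. indep X \<and> Y \<subseteq> X \<longrightarrow> indep Y) \<and>
     (\<forall>X Y. indep X \<and> indep Y \<and> card X < card Y \<longrightarrow> (\<exists>y\<in>Y - X. indep (insert y X)))"

definition restr :: "('a set \<Rightarrow> bool) \<Rightarrow> 'a set \<Rightarrow> ('a set \<Rightarrow> bool)" where
  "restr indep S = (\<lambda>X. indep X \<and> X \<subseteq> S)"

definition circuit :: "'a set \<Rightarrow> ('a set \<Rightarrow> bool) \<Rightarrow> 'a set \<Rightarrow> bool" where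
  "circuit F indep C \<longleftrightarrow> C \<subseteq> F \<and> \<not> indep C \<and> (\<forall>x\<in>C. indep (C - {x}))"

definition first_circuit :: "'a set \<Rightarrow> ('a set \<Rightarrow> bool) \<Rightarrow> 'a list \<Rightarrow> 'a set" where
  "first_circuit F indep \<pi> =
     (let j = (LEAST j. \<not> indep (set (take (Suc j) \<pi>)))
      in THE C. circuit F indep C \<and> C \<subseteq> set (take (Suc j) \<pi>))"

definition perm_prob :: "'a set \<Rightarrow> ('a list \<Rightarrow> bool) \<Rightarrow> real" where
  "perm_prob F P = real (card {\<pi> \<in> permutations_of_set F. P \<pi>}) / real (card (permutations_of_set F))"

definition hit_prob :: "'a set \<Rightarrow> ('a set \<Rightarrow> bool) \<Rightarrow> 'a set \<Rightarrow> real" where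
  "hit_prob F indep T = perm_prob F (\<lambda>\<pi>. first_circuit F indep \<pi> \<inter> T \<noteq> {})"

definition circ_mass :: "'a set \<Rightarrow> ('a set \<Rightarrow> bool) \<Rightarrow> 'a set \<Rightarrow> real" where
  "circ_mass F indep T = perm_prob F (\<lambda>\<pi>. first_circuit F indep \<pi> \<subseteq> T)"

end

(* If the first circuit C of a permutation of E lies in S, deleting the elements outside S from
   the permutation does not change its first circuit: the prefix before the last element of C
   stays independent, the next prefix still contains C, and a circuit inside an independent set
   plus one element is unique. Deleting the elements outside S from a uniformly random
   permutation of E gives a uniformly random permutation of S, because any two fibres of this
   map are related by a relabelling of S. Hence the event "C \<subseteq> S and C meets T" is contained in
   an event of probability p_{T,M|S}. The equality is additivity over the disjoint events
   "C \<subseteq> S - T" and "C \<subseteq> S, C meets T". *)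

theory Submission
  imports Defs
begin

lemma matroid_finite: "matroid E indep \<Longrightarrow> finite E"
  by (simp add: matroid_def)

lemma matroid_indep_subset: "matroid E indep \<Longrightarrow> indep X \<Longrightarrow> X \<subseteq> E"
  by (simp add: matroid_def)

lemma matroid_indep_empty: "matroid E indep \<Longrightarrow> indep {}"
  by (simp add: matroid_def)

lemma matroid_indep_mono: "matroid E indep \<Longrightarrow> indep X \<Longrightarrow> Y \<subseteq> X \<Longrightarrow> indep Y"
  by (simp add: matroid_def)

lemma matroid_augment:
  "matroid E indep \<Longrightarrow> indep X \<Longrightarrow> indep Y \<Longrightarrow> card X < card Y \<Longrightarrow> \<exists>y\<in>Y - X. indep (insert y X)"
  by (simp add: matroid_def)

lemma matroid_indep_finite: "matroid E indep \<Longrightarrow> indep X \<Longrightarrow> finite X"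
  using matroid_finite matroid_indep_subset finite_subset by metis

lemma matroid_augment_to_card:
  assumes m: "matroid E indep"
  shows "indep X \<Longrightarrow> indep Y \<Longrightarrow> card X \<le> card Y \<Longrightarrow>
    \<exists>Z. indep Z \<and> X \<subseteq> Z \<and> Z \<subseteq> X \<union> Y \<and> card Z = card Y"
proof (induction "card Y - card X" arbitrary: X)
  case 0
  then show ?case by (intro exI[of _ X]) auto
next
  case (Suc n)
  then have "card X < card Y" by simp
  then obtain y where y: "y \<in> Y - X" "indep (insert y X)"
    using matroid_augment[OF m Suc.prems(1,2)] by blast
  have "card (insert y X) = Suc (card X)"
    using y matroid_indep_finite[OF m Suc.prems(1)] by simp
  then have "n = card Y - card (insert y X)" "card (insert y X) \<le> card Y"
    using Suc.hyps(2) \<open>card X < card Y\<close> by simp_all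
  then obtain Z where "indep Z" "insert y X \<subseteq> Z" "Z \<subseteq> insert y X \<union> Y" "card Z = card Y"
    using Suc.hyps(1) Suc.prems(2) y(2) by blast
  then show ?case using y by (intro exI[of _ Z]) auto
qed

lemma matroid_restr:
  assumes m: "matroid E indep" and S: "S \<subseteq> E"
  shows "matroid S (restr indep S)"
proof -
  have "\<exists>y\<in>Y - X. indep (insert y X) \<and> insert y X \<subseteq> S"
    if "indep X \<and> X \<subseteq> S" "indep Y \<and> Y \<subseteq> S" "card X < card Y" for X Y
    using matroid_augment[OF m] that by blast
  then show ?thesis
    using matroid_finite[OF m] S matroid_indep_empty[OF m] matroid_indep_mono[OF m]
    unfolding matroid_def restr_def by (blast intro: finite_subset)
qed

lemma dependent_contains_circuit:
  assumes "finite X" "X \<subseteq> F" "\<not> indep X"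
  shows "\<exists>C\<subseteq>X. circuit F indep C"
  using assms
proof (induction "card X" arbitrary: X rule: less_induct)
  case less
  show ?case
  proof (cases "\<forall>x\<in>X. indep (X - {x})")
    case True
    then show ?thesis using less.prems by (auto simp: circuit_def)
  next
    case False
    then obtain x where x: "x \<in> X" "\<not> indep (X - {x})" by blast
    then have "card (X - {x}) < card X" using less.prems(1) by (meson card_Diff1_less)
    then show ?thesis using less.hyps[of "X - {x}"] less.prems x by blast
  qed
qed

lemma circuit_subset_eq:
  assumes m: "matroid E indep" and C1: "circuit F indep C1" and C2: "circuit F indep C2"
    and sub: "C1 \<subseteq> C2"
  shows "C1 = C2"
proof (rule ccontr)
  assume "C1 \<noteq> C2"
  then obtain y where "y \<in> C2" "C1 \<subseteq> C2 - {y}" using sub by blast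
  then have "indep C1" using C2 matroid_indep_mono[OF m] by (auto simp: circuit_def)
  then show False using C1 by (simp add: circuit_def)
qed

text \<open>If the circuits differ, augmenting \<open>C1 - e\<close> (for some \<open>e \<in> C1 - C2\<close>) from \<open>I\<close> yields the
  independent set \<open>I + x - e\<close>, which contains \<open>C2\<close>.\<close>
lemma circuit_unique_in_insert:
  assumes m: "matroid E indep" and I: "indep I"
    and C1: "circuit F indep C1" "C1 \<subseteq> insert x I" and C2: "circuit F indep C2" "C2 \<subseteq> insert x I"
  shows "C1 = C2"
proof (cases "C1 \<subseteq> C2")
  case True
  then show ?thesis using circuit_subset_eq[OF m C1(1) C2(1)] by blast
next
  case False
  then obtain e where e: "e \<in> C1" "e \<notin> C2" by blast
  have dep_in_I: "\<not> C \<subseteq> I" if "circuit F indep C" for C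
    using that matroid_indep_mono[OF m I] by (auto simp: circuit_def)
  have xI: "x \<notin> I" and eI: "e \<in> I"
    using dep_in_I[OF C1(1)] dep_in_I[OF C2(1)] C1(2) C2(2) e by (auto simp: insert_absorb)
  have fI: "finite I" using matroid_indep_finite[OF m I] .
  have card_Ie: "card (insert x I - {e}) = card I" using fI xI eI by simp
  have "card (C1 - {e}) \<le> card I"
    using card_mono[of "insert x I - {e}" "C1 - {e}"] C1(2) card_Ie fI by auto
  moreover have "indep (C1 - {e})" using C1(1) e(1) by (simp add: circuit_def)
  ultimately obtain Z where Z: "indep Z" "C1 - {e} \<subseteq> Z" "Z \<subseteq> (C1 - {e}) \<union> I" "card Z = card I"
    using matroid_augment_to_card[OF m _ I] by blast
  have "e \<notin> Z"
    using Z(1,2) matroid_indep_mono[OF m Z(1), of C1] C1(1) by (auto simp: circuit_def insert_absorb)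
  then have "Z \<subseteq> insert x I - {e}" using Z(3) C1(2) by blast
  then have "Z = insert x I - {e}" using card_subset_eq fI Z(4) card_Ie by (metis finite_Diff finite_insert)
  then have "C2 \<subseteq> Z" using C2(2) e(2) by blast
  then show ?thesis using matroid_indep_mono[OF m Z(1)] C2(1) by (auto simp: circuit_def)
qed

lemma first_circuit_eqI:
  assumes m: "matroid F indep" and indep_prefix: "indep (set (take k xs))"
    and C: "circuit F indep C" "C \<subseteq> set (take (Suc k) xs)"
  shows "first_circuit F indep xs = C"
proof -
  have prefix_insert: "set (take (Suc k) xs) \<subseteq> insert (xs ! k) (set (take k xs))"
    by (cases "k < length xs") (auto simp: take_Suc_conv_app_nth)
  have dep: "\<not> indep (set (take (Suc k) xs))"
    using C matroid_indep_mono[OF m] by (auto simp: circuit_def)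
  have least: "(LEAST j. \<not> indep (set (take (Suc j) xs))) = k"
  proof (rule Least_equality)
    fix j assume dep_j: "\<not> indep (set (take (Suc j) xs))"
    show "k \<le> j"
    proof (rule ccontr)
      assume "\<not> k \<le> j"
      then have "set (take (Suc j) xs) \<subseteq> set (take k xs)" by (simp add: set_take_subset_set_take)
      then show False using dep_j matroid_indep_mono[OF m indep_prefix] by blast
    qed
  qed (fact dep)
  show ?thesis unfolding first_circuit_def Let_def least
  proof (rule the_equality)
    show "circuit F indep C \<and> C \<subseteq> set (take (Suc k) xs)" using C by blast
    fix C' assume "circuit F indep C' \<and> C' \<subseteq> set (take (Suc k) xs)"
    then show "C' = C"
      using circuit_unique_in_insert[OF m indep_prefix _ _ C(1)] C(2) prefix_insert by blast
  qed
qed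

lemma first_circuit_prefix:
  assumes m: "matroid E indep" and dep: "\<not> indep E" and set_xs: "set xs = E"
  obtains j where "indep (set (take j xs))" "circuit E indep (first_circuit E indep xs)"
    "first_circuit E indep xs \<subseteq> set (take (Suc j) xs)"
proof -
  define j where "j = (LEAST j. \<not> indep (set (take (Suc j) xs)))"
  have dep_j: "\<not> indep (set (take (Suc j) xs))"
    unfolding j_def by (rule LeastI[of _ "length xs"]) (simp add: set_xs dep)
  have indep_j: "indep (set (take j xs))"
  proof (cases j)
    case 0
    then show ?thesis using matroid_indep_empty[OF m] by simp
  next
    case (Suc i)
    then have "i < j" by simp
    then have "\<not> \<not> indep (set (take (Suc i) xs))" unfolding j_def by (rule not_less_Least)
    then show ?thesis using Suc by simp
  qed
  obtain C where C: "C \<subseteq> set (take (Suc j) xs)" "circuit E indep C"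
    using dependent_contains_circuit[of _ E indep] dep_j set_xs by (meson finite_set set_take_subset)
  show thesis
    using that[OF indep_j] first_circuit_eqI[OF m indep_j C(2,1)] C by simp
qed

lemma first_circuit_filter:
  assumes m: "matroid E indep" and dep: "\<not> indep E" and set_xs: "set xs = E"
    and S: "S \<subseteq> E" and CS: "first_circuit E indep xs \<subseteq> S"
  shows "first_circuit S (restr indep S) (filter (\<lambda>x. x \<in> S) xs) = first_circuit E indep xs"
proof -
  define C where "C = first_circuit E indep xs"
  obtain j where indep_j: "indep (set (take j xs))" and C: "circuit E indep C"
    and C_prefix: "C \<subseteq> set (take (Suc j) xs)"
    using first_circuit_prefix[OF m dep set_xs] unfolding C_def by blast
  have j: "j < length xs" using indep_j dep set_xs by (metis not_le take_all)
  have "C \<subseteq> insert (xs ! j) (set (take j xs))"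
    using C_prefix j by (simp add: take_Suc_conv_app_nth)
  then have "xs ! j \<in> C"
    using C matroid_indep_mono[OF m indep_j] by (metis circuit_def subset_insert)
  then have xj: "xs ! j \<in> S" using CS C_def by blast
  let ?P = "\<lambda>x. x \<in> S"
  define k where "k = length (filter ?P (take j xs))"
  have split: "filter ?P xs = filter ?P (take j xs) @ xs ! j # filter ?P (drop (Suc j) xs)"
    using xj j by (subst id_take_nth_drop[OF j]) simp
  have "take k (filter ?P xs) = filter ?P (take j xs)"
    and "set (take (Suc k) (filter ?P xs)) = set (take (Suc j) xs) \<inter> S"
    unfolding k_def split using j xj by (auto simp: take_Suc_conv_app_nth)
  moreover have "circuit S (restr indep S) C"
    using C CS C_def by (auto simp: circuit_def restr_def)
  ultimately show ?thesis
    using first_circuit_eqI[OF matroid_restr[OF m S], of k "filter ?P xs" C] C_prefix CS C_def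
      matroid_indep_mono[OF m indep_j]
    by (auto simp: restr_def)
qed

lemma perm_prob_diff:
  assumes "\<And>xs. Q xs \<Longrightarrow> P xs"
  shows "perm_prob F P - perm_prob F Q = perm_prob F (\<lambda>xs. P xs \<and> \<not> Q xs)"
proof -
  let ?Ps = "\<lambda>R. {xs \<in> permutations_of_set F. R xs}"
  have "?Ps P = ?Ps Q \<union> ?Ps (\<lambda>xs. P xs \<and> \<not> Q xs)" "?Ps Q \<inter> ?Ps (\<lambda>xs. P xs \<and> \<not> Q xs) = {}"
    using assms by blast+
  then have "card (?Ps P) = card (?Ps Q) + card (?Ps (\<lambda>xs. P xs \<and> \<not> Q xs))"
    by (simp add: card_Un_disjoint)
  then show ?thesis unfolding perm_prob_def by (simp add: add_divide_distrib)
qed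

lemma perm_prob_mono:
  assumes "\<And>xs. xs \<in> permutations_of_set F \<Longrightarrow> P xs \<Longrightarrow> Q xs"
  shows "perm_prob F P \<le> perm_prob F Q"
  unfolding perm_prob_def using assms
  by (intro divide_right_mono of_nat_mono card_mono) auto

lemma permutations_of_set_permutes_map:
  assumes a: "a \<in> permutations_of_set S" and b: "b \<in> permutations_of_set S"
  obtains p where "p permutes S" "map p a = b"
proof
  have len: "length a = length b"
    using a b by (metis distinct_card permutations_of_setD)
  have lp: "list_permutes (zip a b) S"
    using a b len by (auto simp: permutations_of_set_def)
  then show "permutation_of_list (zip a b) permutes S" by simp
  show "map (permutation_of_list (zip a b)) a = b"
    using len by (intro nth_equalityI)
      (auto intro!: permutation_of_list_unique[OF lp] simp: in_set_zip)
qed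

lemma card_filter_fibre_le:
  assumes a: "a \<in> permutations_of_set S" and b: "b \<in> permutations_of_set S" and S: "S \<subseteq> E"
  shows "card {xs \<in> permutations_of_set E. filter (\<lambda>x. x \<in> S) xs = a}
    \<le> card {xs \<in> permutations_of_set E. filter (\<lambda>x. x \<in> S) xs = b}"
proof -
  obtain p where p: "p permutes S" "map p a = b"
    using permutations_of_set_permutes_map[OF a b] .
  have pE: "p permutes E" using permutes_subset[OF p(1) S] .
  have "map p ` {xs \<in> permutations_of_set E. filter (\<lambda>x. x \<in> S) xs = a}
      \<subseteq> {xs \<in> permutations_of_set E. filter (\<lambda>x. x \<in> S) xs = b}"
  proof clarify
    fix xs assume xs: "xs \<in> permutations_of_set E" "a = filter (\<lambda>x. x \<in> S) xs"
    have "filter (\<lambda>x. x \<in> S) (map p xs) = map p (filter (\<lambda>x. x \<in> S) xs)"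
      using permutes_in_image[OF p(1)] by (simp add: filter_map comp_def)
    then show "map p xs \<in> permutations_of_set E \<and> filter (\<lambda>x. x \<in> S) (map p xs) = b"
      using xs p(2) permutations_of_set_image_permutes[OF pE] by blast
  qed
  moreover have "inj (map p)"
    using permutes_inj[OF p(1)] by (simp add: inj_mapI)
  ultimately show ?thesis
    by (intro card_inj_on_le[where f = "map p"]) (auto intro: inj_on_subset)
qed

lemma card_filter_preimage:
  assumes E: "finite E" and S: "S \<subseteq> E" and A: "A \<subseteq> permutations_of_set S"
    and s: "s \<in> permutations_of_set S"
  shows "card {xs \<in> permutations_of_set E. filter (\<lambda>x. x \<in> S) xs \<in> A}
    = card A * card {xs \<in> permutations_of_set E. filter (\<lambda>x. x \<in> S) xs = s}"
proof -
  let ?fibre = "\<lambda>\<sigma>. {xs \<in> permutations_of_set E. filter (\<lambda>x. x \<in> S) xs = \<sigma>}"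
  have "{xs \<in> permutations_of_set E. filter (\<lambda>x. x \<in> S) xs \<in> A} = (\<Union>\<sigma>\<in>A. ?fibre \<sigma>)"
    by blast
  moreover have "finite A" using A finite_subset finite_permutations_of_set by blast
  then have "card (\<Union>\<sigma>\<in>A. ?fibre \<sigma>) = (\<Sum>\<sigma>\<in>A. card (?fibre \<sigma>))"
    by (intro card_UN_disjoint) auto
  moreover have "card (?fibre \<sigma>) = card (?fibre s)" if "\<sigma> \<in> A" for \<sigma>
    using card_filter_fibre_le[OF _ _ S] s A that by (meson antisym subsetD)
  ultimately show ?thesis by simp
qed

lemma perm_prob_filter:
  assumes E: "finite E" and S: "S \<subseteq> E"
  shows "perm_prob E (\<lambda>xs. P (filter (\<lambda>x. x \<in> S) xs)) = perm_prob S P"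
proof -
  obtain s where s: "s \<in> permutations_of_set S"
    using E S finite_subset permutations_of_set_empty_iff by blast
  let ?c = "card {xs \<in> permutations_of_set E. filter (\<lambda>x. x \<in> S) xs = s}"
  have "permutations_of_set E
      = {xs \<in> permutations_of_set E. filter (\<lambda>x. x \<in> S) xs \<in> permutations_of_set S}"
    using S by (auto simp: permutations_of_set_def)
  then have all: "card (permutations_of_set E) = card (permutations_of_set S) * ?c"
    using card_filter_preimage[OF E S order_refl s] by simp
  have "card {xs \<in> permutations_of_set E. P (filter (\<lambda>x. x \<in> S) xs)}
      = card {xs \<in> permutations_of_set E. filter (\<lambda>x. x \<in> S) xs \<in> {\<sigma> \<in> permutations_of_set S. P \<sigma>}}"
    using S by (intro arg_cong[where f = card]) (auto simp: permutations_of_set_def)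
  also have "\<dots> = card {\<sigma> \<in> permutations_of_set S. P \<sigma>} * ?c"
    by (rule card_filter_preimage[OF E S _ s]) auto
  finally have card_P: "card {xs \<in> permutations_of_set E. P (filter (\<lambda>x. x \<in> S) xs)}
      = card {\<sigma> \<in> permutations_of_set S. P \<sigma>} * ?c" .
  have "card (permutations_of_set E) \<noteq> 0" using E by simp
  then have "?c \<noteq> 0" unfolding all by (metis mult_0_right)
  then show ?thesis unfolding perm_prob_def all card_P of_nat_mult
    by (intro mult_divide_mult_cancel_right) simp
qed

theorem mainTheorem5:
  fixes E S T :: "'a set" and indep :: "'a set \<Rightarrow> bool"
  assumes "matroid E indep" and "\<not> indep E"
    and "S \<subseteq> E" and "\<not> indep S" and "T \<subseteq> S"
  shows "circ_mass E indep S - circ_mass E indep (S - T)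
           = perm_prob E (\<lambda>\<pi>. first_circuit E indep \<pi> \<subseteq> S \<and> first_circuit E indep \<pi> \<inter> T \<noteq> {})
       \<and> perm_prob E (\<lambda>\<pi>. first_circuit E indep \<pi> \<subseteq> S \<and> first_circuit E indep \<pi> \<inter> T \<noteq> {})
           \<le> hit_prob S (restr indep S) T"
proof
  let ?C = "first_circuit E indep"
  have "circ_mass E indep S - circ_mass E indep (S - T)
      = perm_prob E (\<lambda>\<pi>. ?C \<pi> \<subseteq> S \<and> \<not> ?C \<pi> \<subseteq> S - T)"
    unfolding circ_mass_def by (rule perm_prob_diff) blast
  also have "\<dots> = perm_prob E (\<lambda>\<pi>. ?C \<pi> \<subseteq> S \<and> ?C \<pi> \<inter> T \<noteq> {})"
    by (intro arg_cong[where f = "perm_prob E"] ext) blast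
  finally show "circ_mass E indep S - circ_mass E indep (S - T)
      = perm_prob E (\<lambda>\<pi>. ?C \<pi> \<subseteq> S \<and> ?C \<pi> \<inter> T \<noteq> {})" .
  have "perm_prob E (\<lambda>\<pi>. ?C \<pi> \<subseteq> S \<and> ?C \<pi> \<inter> T \<noteq> {})
      \<le> perm_prob E (\<lambda>\<pi>. first_circuit S (restr indep S) (filter (\<lambda>x. x \<in> S) \<pi>) \<inter> T \<noteq> {})"
    using first_circuit_filter[OF assms(1,2) _ assms(3)]
    by (intro perm_prob_mono) (auto simp: permutations_of_set_def)
  also have "\<dots> = hit_prob S (restr indep S) T"
    unfolding hit_prob_def using perm_prob_filter[OF matroid_finite[OF assms(1)] assms(3)] .
  finally show "perm_prob E (\<lambda>\<pi>. ?C \<pi> \<subseteq> S \<and> ?C \<pi> \<inter> T \<noteq> {}) \<le> hit_prob S (restr indep S) T" .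
qed

end
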